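(* Let $d\ge2$, $\varepsilon\ge1$, $s=\lceil d/(1+e^\varepsilon)\rceil$. Let $q^{\mathrm{ss}}$ be the $\varepsilon$-LDP $\texttt{Subset Selection}$ mechanism with estimator $\hat{\mathbf{x}}^{\mathrm{ss}}=(\mathbf{z}-b_{\mathrm{ss}}\mathbf{1})/m_{\mathrm{ss}}$, and let $q^{\mathrm{mmrc}}$ be the MMRC mechanism simulating it with $N$ candidates and estimator $\hat{\mathbf{x}}^{\mathrm{mmrc}}=(\mathbf{z}_K-b_{\mathrm{mmrc}}\mathbf{1})/m_{\mathrm{mmrc}}$. Let $\lambda>0$. If \[ N\ge\frac{2(e^\varepsilon+1)^2(1+\lambda)^2}{0.24^2\lambda^2}\ln\Big(\frac{8(1+\lambda)}{0.24\lambda}\Big), \] then for every $\mathbf{x}\in\{e_1,\dots,e_d\}$, \[ \mathbb{E}_{q^{\mathrm{mmrc}}}\big[\|\hat{\mathbf{x}}^{\mathrm{mmrc}}-\mathbf{x}\|_2^2\big]\le(1+4\lambda+5\lambda^2+2\lambda^3)\,\mathbb{E}_{q^{\mathrm{ss}}}\big[\|\hat{\mathbf{x}}^{\mathrm{ss}}-\mathbf{x}\|_2^2\big]. \]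
   Context: $\texttt{Subset Selection}$: inputs $\{e_1,\dots,e_d\}$; outputs $\mathcal{Z}=\{\mathbf{z}\in\{0,1\}^d:\sum_iz_i=s\}$; for $\mathbf{x}=e_j$, $\mathsf{Cap}_{\mathbf{x}}=\{\mathbf{z}\in\mathcal{Z}:z_j=1\}$; $q^{\mathrm{ss}}(\mathbf{z}\mid\mathbf{x})=c_1=\frac{e^\varepsilon}{\binom{d-1}{s-1}e^\varepsilon+\binom{d-1}{s}}$ on $\mathsf{Cap}_{\mathbf{x}}$ and $c_2=\frac{1}{\binom{d-1}{s-1}e^\varepsilon+\binom{d-1}{s}}$ otherwise; $m_{\mathrm{ss}}=\frac{s(d-s)(e^\varepsilon-1)}{(d-1)(s(e^\varepsilon-1)+d)}$, $b_{\mathrm{ss}}=\frac{s((s-1)e^\varepsilon+(d-s))}{(d-1)(s(e^\varepsilon-1)+d)}$; $\mathbf{1}$ is the all-ones vector. Let $\bar\theta=s/d$. MMRC: draw $\mathbf{z}_1,\dots,\mathbf{z}_N$ i.i.d. uniform on $\mathcal{Z}$; $\theta$ = fraction of candidates in $\mathsf{Cap}_{\mathbf{x}}$; $\pi^{\mathrm{mrc}}(k)=\frac1N\frac{c_i}{\theta c_1+(1-\theta)c_2}$ ($i=1$ cap, $i=2$ otherwise); $t_u=\frac1N\frac{c_1}{\bar\theta c_1+(1-\bar\theta)c_2}$, $t_l=\frac1N\frac{c_2}{\bar\theta c_1+(1-\bar\theta)c_2}$; $\pi^{\mathrm{mmrc}}=\pi^{\mathrm{mrc}}$ if $\theta=\bar\theta$;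 if $\theta<\bar\theta$, $t_u$ on cap candidates and $\frac{1-N\theta t_u}{N(1-\theta)}$ on others; if $\theta>\bar\theta$, $t_l$ on non-cap candidates and $\frac{1-N(1-\theta)t_l}{N\theta}$ on cap ones; $K\sim\pi^{\mathrm{mmrc}}$. With $N\theta\sim\mathrm{Binom}(N,s/d)$, $G=\mathbb{E}_\theta\big[\frac{e^\varepsilon\theta}{e^\varepsilon\bar\theta+1-\bar\theta}\mathbf{1}(\theta\le\bar\theta)+\frac{e^\varepsilon\bar\theta+\theta-\bar\theta}{e^\varepsilon\bar\theta+1-\bar\theta}\mathbf{1}(\theta>\bar\theta)\big]$, $m_{\mathrm{mmrc}}=\frac{d}{d-1}G-\frac{s}{d-1}$, $b_{\mathrm{mmrc}}=\frac{s-G}{d-1}$. Expectations under $q^{\mathrm{mmrc}}$ are over the candidates and $K$. *)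

theory Defs
  imports Complex_Main "HOL-Library.FuncSet"
begin

text \<open>Coordinates are indexed by {..<d}; the input e_j is represented by the index j < d;
an output z in {0,1}^d with s ones is represented by its support S, a subset of {..<d}
with card S = s.\<close>

definition ss_outputs :: "nat \<Rightarrow> nat \<Rightarrow> nat set set" where
  "ss_outputs d s = {S. S \<subseteq> {..<d} \<and> card S = s}"

definition ss_c1 :: "nat \<Rightarrow> nat \<Rightarrow> real \<Rightarrow> real" where
  "ss_c1 d s eps = exp eps / (real ((d-1) choose (s-1)) * exp eps + real ((d-1) choose s))"

definition ss_c2 :: "nat \<Rightarrow> nat \<Rightarrow> real \<Rightarrow> real" where
  "ss_c2 d s eps = 1 / (real ((d-1) choose (s-1)) * exp eps + real ((d-1) choose s))"

definition q_ss :: "nat \<Rightarrow> nat \<Rightarrow> real \<Rightarrow> nat \<Rightarrow> nat set \<Rightarrow> real" where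
  "q_ss d s eps j S = (if j \<in> S then ss_c1 d s eps else ss_c2 d s eps)"

definition m_ss :: "nat \<Rightarrow> nat \<Rightarrow> real \<Rightarrow> real" where
  "m_ss d s eps = real s * (real d - real s) * (exp eps - 1) /
     ((real d - 1) * (real s * (exp eps - 1) + real d))"

definition b_ss :: "nat \<Rightarrow> nat \<Rightarrow> real \<Rightarrow> real" where
  "b_ss d s eps = real s * ((real s - 1) * exp eps + (real d - real s)) /
     ((real d - 1) * (real s * (exp eps - 1) + real d))"

definition est_loss :: "nat \<Rightarrow> real \<Rightarrow> real \<Rightarrow> nat \<Rightarrow> nat set \<Rightarrow> real" where
  "est_loss d m b j S = (\<Sum>i<d. (((if i \<in> S then 1 else 0) - b) / m - (if i = j then 1 else 0))\<^sup>2)"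

definition ss_risk :: "nat \<Rightarrow> nat \<Rightarrow> real \<Rightarrow> nat \<Rightarrow> real" where
  "ss_risk d s eps j = (\<Sum>S\<in>ss_outputs d s. q_ss d s eps j S * est_loss d (m_ss d s eps) (b_ss d s eps) j S)"

definition mmrc_pi :: "nat \<Rightarrow> nat \<Rightarrow> real \<Rightarrow> nat \<Rightarrow> nat \<Rightarrow> (nat \<Rightarrow> nat set) \<Rightarrow> nat \<Rightarrow> real" where
  "mmrc_pi d s eps N j zs k =
    (let c1 = ss_c1 d s eps; c2 = ss_c2 d s eps;
         \<theta> = real (card {l\<in>{..<N}. j \<in> zs l}) / real N;
         \<theta>b = real s / real d;
         tu = c1 / (real N * (\<theta>b * c1 + (1 - \<theta>b) * c2));
         tl = c2 / (real N * (\<theta>b * c1 + (1 - \<theta>b) * c2));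
         cap = (j \<in> zs k)
     in if \<theta> = \<theta>b then (if cap then c1 else c2) / (real N * (\<theta> * c1 + (1 - \<theta>) * c2))
        else if \<theta> < \<theta>b then (if cap then tu else (1 - real N * \<theta> * tu) / (real N * (1 - \<theta>)))
        else (if cap then (1 - real N * (1 - \<theta>) * tl) / (real N * \<theta>) else tl))"

definition mmrc_G :: "nat \<Rightarrow> nat \<Rightarrow> real \<Rightarrow> nat \<Rightarrow> real" where
  "mmrc_G d s eps N =
    (let \<theta>b = real s / real d;
         f = (\<lambda>\<theta>::real. if \<theta> \<le> \<theta>b then exp eps * \<theta> / (exp eps * \<theta>b + 1 - \<theta>b)
                        else (exp eps * \<theta>b + \<theta> - \<theta>b) / (exp eps * \<theta>b + 1 - \<theta>b))
     in \<Sum>n\<le>N. real (N choose n) * \<theta>b ^ n * (1 - \<theta>b) ^ (N - n) * f (real n / real N))"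

definition m_mmrc :: "nat \<Rightarrow> nat \<Rightarrow> real \<Rightarrow> nat \<Rightarrow> real" where
  "m_mmrc d s eps N = real d / (real d - 1) * mmrc_G d s eps N - real s / (real d - 1)"

definition b_mmrc :: "nat \<Rightarrow> nat \<Rightarrow> real \<Rightarrow> nat \<Rightarrow> real" where
  "b_mmrc d s eps N = (real s - mmrc_G d s eps N) / (real d - 1)"

text \<open>Expectation over i.i.d. uniform candidates z_1..z_N (indexed 0..N-1) and K ~ pi^mmrc\<close>
definition mmrc_risk :: "nat \<Rightarrow> nat \<Rightarrow> real \<Rightarrow> nat \<Rightarrow> nat \<Rightarrow> real" where
  "mmrc_risk d s eps N j =
    (\<Sum>zs\<in>PiE {..<N} (\<lambda>_. ss_outputs d s).
       (\<Sum>k<N. mmrc_pi d s eps N j zs k *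
          est_loss d (m_mmrc d s eps N) (b_mmrc d s eps N) j (zs k)))
    / real (card (ss_outputs d s)) ^ N"

end

(* Every output has exactly s ones, so the expected squared error of (z - b 1)/m depends on the
   output distribution only through the probability x that the output contains the true
   coordinate j; for the unbiased choice of m and b it is V(x)/m(x)^2 with m(x) = (d x - s)/(d - 1)
   and V a concave quadratic (debiased_variance).  Subset selection has x = g = e p/(e p + 1 - p),
   where e = exp eps and p = s/d.  For MMRC the number of candidates in the cap is Binom(N, p), and
   averaging the selection probabilities over it gives x = G = g - (e - 1)/(e p + 1 - p) E[(p - theta)_+].
   By Jensen, E[(p - theta)_+] = E|theta - p|/2 <= sqrt(p (1 - p)/N)/2, so once N is large in terms of
   e and lam we get m(G) >= m(g)/(1 + lam) and V(G) <= (1 + 2 lam) V(g); the choice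
   s = ceiling(d/(1 + e)) keeps p (1 - p) >= 1/(2 (1 + e)).  Of the sample-size hypothesis only
   ln(8 (1 + lam)/(0.24 lam)) >= 1 is used. *)

theory Submission
  imports Defs "HOL-Analysis.Convex"
begin

section \<open>Binomial weights\<close>

lemma sum_if_eq_card:
  fixes a b :: real
  assumes "finite A"
  shows "(\<Sum>x\<in>A. if P x then a else b) = real (card {x\<in>A. P x}) * a + real (card {x\<in>A. \<not> P x}) * b"
proof -
  have "A \<inter> {x. P x} = {x\<in>A. P x}" and "A \<inter> - {x. P x} = {x\<in>A. \<not> P x}"
    by auto
  then show ?thesis
    using sum.If_cases[OF assms, of P "\<lambda>_. a" "\<lambda>_. b"] by simp
qed

lemma binomial_sum_Suc:
  fixes a b :: real and F :: "nat \<Rightarrow> real"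
  shows "(\<Sum>n\<le>Suc N. real (Suc N choose n) * a ^ n * b ^ (Suc N - n) * F n)
       = a * (\<Sum>n\<le>N. real (N choose n) * a ^ n * b ^ (N - n) * F (Suc n))
         + b * (\<Sum>n\<le>N. real (N choose n) * a ^ n * b ^ (N - n) * F n)"
proof -
  have "(\<Sum>n\<le>Suc N. real (Suc N choose n) * a ^ n * b ^ (Suc N - n) * F n)
      = b ^ Suc N * F 0 + (\<Sum>n\<le>N. real (N choose Suc n) * a ^ Suc n * b ^ (N - n) * F (Suc n))
        + (\<Sum>n\<le>N. real (N choose n) * a ^ Suc n * b ^ (N - n) * F (Suc n))"
    by (subst sum.atMost_Suc_shift) (simp add: algebra_simps sum.distrib)
  also have "b ^ Suc N * F 0 + (\<Sum>n\<le>N. real (N choose Suc n) * a ^ Suc n * b ^ (N - n) * F (Suc n))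
      = (\<Sum>n\<le>Suc N. real (N choose n) * a ^ n * b ^ (Suc N - n) * F n)"
    by (subst sum.atMost_Suc_shift) simp
  also have "\<dots> = b * (\<Sum>n\<le>N. real (N choose n) * a ^ n * b ^ (N - n) * F n)"
    by (auto simp: sum_distrib_left Suc_diff_le mult_ac intro!: sum.cong)
  finally show ?thesis
    by (simp add: sum_distrib_left mult_ac)
qed

lemma binomial_sum_index_shift:
  fixes p q :: real and F :: "nat \<Rightarrow> real"
  shows "(\<Sum>n\<le>Suc M. real n * (real (Suc M choose n) * p ^ n * q ^ (Suc M - n)) * F n)
       = real (Suc M) * p * (\<Sum>n\<le>M. real (M choose n) * p ^ n * q ^ (M - n) * F (Suc n))"
proof -
  have "real (Suc n) * real (Suc M choose Suc n) = real (Suc M) * real (M choose n)" for n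
    by (metis Suc_times_binomial of_nat_mult)
  then have summand: "real (Suc n) * (real (Suc M choose Suc n) * p ^ Suc n * q ^ (Suc M - Suc n)) * F (Suc n)
      = real (Suc M) * p * (real (M choose n) * p ^ n * q ^ (M - n) * F (Suc n))" for n
    by (simp add: mult_ac)
  show ?thesis
    by (simp only: sum.atMost_Suc_shift summand sum_distrib_left)
qed

lemma binomial_weights_sum:
  fixes p :: real
  shows "(\<Sum>n\<le>N. real (N choose n) * p ^ n * (1 - p) ^ (N - n)) = 1"
  using binomial_ring[of p "1 - p" N] by (simp add: mult_ac)

lemma binomial_mean:
  fixes p :: real
  shows "(\<Sum>n\<le>N. real n * (real (N choose n) * p ^ n * (1 - p) ^ (N - n))) = real N * p"
  by (cases N) (simp_all add: binomial_sum_index_shift[where F = "\<lambda>_. 1", simplified] binomial_weights_sum)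

lemma binomial_second_moment:
  fixes p :: real
  shows "(\<Sum>n\<le>N. (real n)\<^sup>2 * (real (N choose n) * p ^ n * (1 - p) ^ (N - n)))
       = real N * p * ((real N - 1) * p + 1)"
proof (cases N)
  case (Suc M)
  have "(\<Sum>n\<le>Suc M. (real n)\<^sup>2 * (real (Suc M choose n) * p ^ n * (1 - p) ^ (Suc M - n)))
      = real (Suc M) * p * (\<Sum>n\<le>M. real (M choose n) * p ^ n * (1 - p) ^ (M - n) * real (Suc n))"
    using binomial_sum_index_shift[where F = real] by (simp add: power2_eq_square mult_ac)
  also have "(\<Sum>n\<le>M. real (M choose n) * p ^ n * (1 - p) ^ (M - n) * real (Suc n)) = real M * p + 1"
    using binomial_mean[of M p] binomial_weights_sum[of M p]
    by (simp add: algebra_simps sum.distrib)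
  finally show ?thesis using Suc by simp
qed simp

lemma binomial_centered_mean:
  fixes p :: real
  assumes "N > 0"
  shows "(\<Sum>n\<le>N. real (N choose n) * p ^ n * (1 - p) ^ (N - n) * (real n / real N - p)) = 0"
proof -
  have "(\<Sum>n\<le>N. real (N choose n) * p ^ n * (1 - p) ^ (N - n) * (real n / real N - p))
      = (\<Sum>n\<le>N. real n * (real (N choose n) * p ^ n * (1 - p) ^ (N - n))) / real N
        - p * (\<Sum>n\<le>N. real (N choose n) * p ^ n * (1 - p) ^ (N - n))"
    by (simp add: algebra_simps sum_subtractf sum_divide_distrib sum_distrib_left)
  then show ?thesis
    using assms by (simp add: binomial_mean binomial_weights_sum)
qed

lemma binomial_centered_variance:
  fixes p :: real
  assumes "N > 0"
  shows "(\<Sum>n\<le>N. real (N choose n) * p ^ n * (1 - p) ^ (N - n) * (real n / real N - p)\<^sup>2)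
       = p * (1 - p) / real N"
proof -
  have "(\<Sum>n\<le>N. real (N choose n) * p ^ n * (1 - p) ^ (N - n) * (real n / real N - p)\<^sup>2)
      = (\<Sum>n\<le>N. (real n)\<^sup>2 * (real (N choose n) * p ^ n * (1 - p) ^ (N - n))) / (real N)\<^sup>2
        - 2 * p * (\<Sum>n\<le>N. real n * (real (N choose n) * p ^ n * (1 - p) ^ (N - n))) / real N
        + p\<^sup>2 * (\<Sum>n\<le>N. real (N choose n) * p ^ n * (1 - p) ^ (N - n))"
    by (simp add: power2_diff power_divide algebra_simps sum_subtractf sum.distrib
        sum_divide_distrib sum_distrib_left sum_distrib_right)
  also have "\<dots> = p * (1 - p) / real N"
    unfolding binomial_mean binomial_second_moment binomial_weights_sum
    using assms by (simp add: field_simps power2_eq_square)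
  finally show ?thesis .
qed

definition binomial_shortfall :: "nat \<Rightarrow> real \<Rightarrow> real" where
  "binomial_shortfall N p =
     (\<Sum>n\<le>N. real (N choose n) * p ^ n * (1 - p) ^ (N - n) * max 0 (p - real n / real N))"

lemma binomial_shortfall_bounds:
  fixes p :: real
  assumes "N > 0" and "0 \<le> p" and "p \<le> 1"
  shows "0 \<le> binomial_shortfall N p" and "4 * real N * (binomial_shortfall N p)\<^sup>2 \<le> p * (1 - p)"
proof -
  define w where "w n = real (N choose n) * p ^ n * (1 - p) ^ (N - n)" for n
  define X where "X n = real n / real N - p" for n
  have w_nonneg: "w n \<ge> 0" for n
    using assms by (simp add: w_def)
  have twice_shortfall: "2 * binomial_shortfall N p = (\<Sum>n\<le>N. w n * \<bar>X n\<bar>)"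
  proof -
    have "2 * binomial_shortfall N p = (\<Sum>n\<le>N. w n * (2 * max 0 (- X n)))"
      by (simp add: binomial_shortfall_def w_def X_def sum_distrib_left mult_ac)
    also have "\<dots> = (\<Sum>n\<le>N. w n * \<bar>X n\<bar> - w n * X n)"
      by (intro sum.cong) (auto simp: max_def right_diff_distrib)
    also have "\<dots> = (\<Sum>n\<le>N. w n * \<bar>X n\<bar>)"
      using binomial_centered_mean[OF \<open>N > 0\<close>, of p] by (simp add: sum_subtractf w_def X_def)
    finally show ?thesis .
  qed
  show "0 \<le> binomial_shortfall N p"
    unfolding binomial_shortfall_def using assms by (intro sum_nonneg) simp
  have "(2 * binomial_shortfall N p)\<^sup>2 \<le> (\<Sum>n\<le>N. w n * \<bar>X n\<bar>\<^sup>2)"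
    unfolding twice_shortfall
    using convex_on_sum[OF _ _ convex_power2, of "{..N}" w "\<lambda>n. \<bar>X n\<bar>"] w_nonneg
    by (simp add: w_def binomial_weights_sum)
  also have "\<dots> = p * (1 - p) / real N"
    using binomial_centered_variance[OF \<open>N > 0\<close>, of p] by (simp add: w_def X_def)
  finally show "4 * real N * (binomial_shortfall N p)\<^sup>2 \<le> p * (1 - p)"
    using \<open>N > 0\<close> by (simp add: field_simps)
qed

section \<open>Counting outputs and candidate lists\<close>

lemma sum_PiE_count_binomial:
  fixes F :: "nat \<Rightarrow> real"
  assumes "finite X"
  shows "(\<Sum>zs\<in>PiE {..<N} (\<lambda>_. X). F (card {l\<in>{..<N}. P (zs l)}))
       = (\<Sum>n\<le>N. real (N choose n) * real (card {x\<in>X. P x}) ^ n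
                  * real (card {x\<in>X. \<not> P x}) ^ (N - n) * F n)"
proof (induction N arbitrary: F)
  case (Suc N)
  define count where "count zs = card {l\<in>{..<N}. P (zs l)}" for zs :: "nat \<Rightarrow> 'a"
  define binsum where "binsum G = (\<Sum>n\<le>N. real (N choose n) * real (card {x\<in>X. P x}) ^ n
                  * real (card {x\<in>X. \<not> P x}) ^ (N - n) * G n)" for G :: "nat \<Rightarrow> real"
  have count_upd: "card {l\<in>{..<Suc N}. P ((zs(N := y)) l)} = count zs + (if P y then 1 else 0)"
    for zs y
  proof -
    have "{l\<in>{..<Suc N}. P ((zs(N := y)) l)} = {l\<in>{..<N}. P (zs l)} \<union> (if P y then {N} else {})"
      by (auto simp: less_Suc_eq)
    then show ?thesis
      by (auto simp: count_def card_insert_if)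
  qed
  have inj: "inj_on (\<lambda>(y, zs). zs(N := y)) (X \<times> PiE {..<N} (\<lambda>_. X))"
    using inj_combinator[of N "{..<N}" "\<lambda>_. X"] by simp
  have "(\<Sum>zs\<in>PiE {..<Suc N} (\<lambda>_. X). F (card {l\<in>{..<Suc N}. P (zs l)}))
      = (\<Sum>(y, zs)\<in>X \<times> PiE {..<N} (\<lambda>_. X). F (card {l\<in>{..<Suc N}. P ((zs(N := y)) l)}))"
    unfolding lessThan_Suc PiE_insert_eq sum.reindex[OF inj] by (simp add: case_prod_unfold)
  also have "\<dots> = (\<Sum>y\<in>X. \<Sum>zs\<in>PiE {..<N} (\<lambda>_. X). F (count zs + (if P y then 1 else 0)))"
    unfolding count_upd by (simp add: sum.cartesian_product)
  also have "\<dots> = (\<Sum>y\<in>X. if P y then binsum (\<lambda>n. F (Suc n)) else binsum F)"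
    using Suc.IH by (intro sum.cong) (auto simp: count_def binsum_def)
  also have "\<dots> = real (card {x\<in>X. P x}) * binsum (\<lambda>n. F (Suc n))
                  + real (card {x\<in>X. \<not> P x}) * binsum F"
    by (rule sum_if_eq_card[OF assms])
  also have "\<dots> = (\<Sum>n\<le>Suc N. real (Suc N choose n) * real (card {x\<in>X. P x}) ^ n
                  * real (card {x\<in>X. \<not> P x}) ^ (Suc N - n) * F n)"
    unfolding binsum_def by (rule binomial_sum_Suc[symmetric])
  finally show ?case .
qed simp

lemma finite_ss_outputs: "finite (ss_outputs d s)"
  by (rule finite_subset[of _ "Pow {..<d}"]) (auto simp: ss_outputs_def)

lemma card_ss_outputs: "card (ss_outputs d s) = d choose s"
  unfolding ss_outputs_def using n_subsets[of "{..<d}" s] by simp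

lemma card_ss_outputs_not_mem:
  assumes "j < d"
  shows "card {S\<in>ss_outputs d s. j \<notin> S} = (d - 1) choose s"
proof -
  have "{S\<in>ss_outputs d s. j \<notin> S} = {S. S \<subseteq> {..<d} - {j} \<and> card S = s}"
    unfolding ss_outputs_def by auto
  then show ?thesis
    using n_subsets[of "{..<d} - {j}" s] assms by simp
qed

lemma card_ss_outputs_mem:
  assumes "j < d" and "1 \<le> s"
  shows "card {S\<in>ss_outputs d s. j \<in> S} = (d - 1) choose (s - 1)"
proof -
  have "{S\<in>ss_outputs d s. j \<in> S} \<union> {S\<in>ss_outputs d s. j \<notin> S} = ss_outputs d s"
    by blast
  moreover have "card ({S\<in>ss_outputs d s. j \<in> S} \<union> {S\<in>ss_outputs d s. j \<notin> S})
      = card {S\<in>ss_outputs d s. j \<in> S} + card {S\<in>ss_outputs d s. j \<notin> S}"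
    by (rule card_Un_disjoint) (auto intro: finite_subset[OF _ finite_ss_outputs])
  ultimately have "d choose s = card {S\<in>ss_outputs d s. j \<in> S} + ((d - 1) choose s)"
    using card_ss_outputs[of d s] card_ss_outputs_not_mem[OF \<open>j < d\<close>, of s] by simp
  moreover have "d choose s = ((d - 1) choose (s - 1)) + ((d - 1) choose s)"
    using assms binomial_Suc_Suc[of "d - 1" "s - 1"] by simp
  ultimately show ?thesis
    by linarith
qed

lemma card_ss_outputs_mem_fraction:
  assumes "j < d" and "1 \<le> s"
  shows "real (card {S\<in>ss_outputs d s. j \<in> S}) = real s / real d * real (card (ss_outputs d s))"
    and "real (card {S\<in>ss_outputs d s. j \<notin> S}) = (1 - real s / real d) * real (card (ss_outputs d s))"
proof -
  have "s * (d choose s) = d * ((d - 1) choose (s - 1))"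
    using assms by (simp add: times_binomial_minus1_eq)
  then have "real s * real (d choose s) = real d * real ((d - 1) choose (s - 1))"
    by (metis of_nat_mult)
  then show mem: "real (card {S\<in>ss_outputs d s. j \<in> S}) = real s / real d * real (card (ss_outputs d s))"
    using assms by (simp add: card_ss_outputs card_ss_outputs_mem field_simps)
  have "d choose s = ((d - 1) choose (s - 1)) + ((d - 1) choose s)"
    using assms binomial_Suc_Suc[of "d - 1" "s - 1"] by simp
  then have "real (card (ss_outputs d s))
      = real (card {S\<in>ss_outputs d s. j \<in> S}) + real (card {S\<in>ss_outputs d s. j \<notin> S})"
    using assms by (simp add: card_ss_outputs card_ss_outputs_mem card_ss_outputs_not_mem)
  then show "real (card {S\<in>ss_outputs d s. j \<notin> S}) = (1 - real s / real d) * real (card (ss_outputs d s))"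
    using mem by (simp add: algebra_simps)
qed

section \<open>The debiased estimator\<close>

(* (z - b 1)/m with m = debias_scale d s x and b = debias_offset d s x is unbiased when the output
   contains j with probability x and every other coordinate with probability (s - x)/(d - 1);
   m_ss, b_ss, m_mmrc and b_mmrc are these parameters at the respective x. *)

definition debias_scale :: "nat \<Rightarrow> nat \<Rightarrow> real \<Rightarrow> real" where
  "debias_scale d s x = (real d * x - real s) / (real d - 1)"

definition debias_offset :: "nat \<Rightarrow> nat \<Rightarrow> real \<Rightarrow> real" where
  "debias_offset d s x = (real s - x) / (real d - 1)"

definition debiased_variance :: "nat \<Rightarrow> nat \<Rightarrow> real \<Rightarrow> real" where
  "debiased_variance d s x =
     x * (1 - x) + (real d - 1) * debias_offset d s x * (1 - debias_offset d s x)"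

definition debiased_risk :: "nat \<Rightarrow> nat \<Rightarrow> real \<Rightarrow> real" where
  "debiased_risk d s x = debiased_variance d s x / (debias_scale d s x)\<^sup>2"

lemma est_loss_eq:
  assumes "S \<subseteq> {..<d}" and "card S = s" and "j < d"
  shows "est_loss d m b j S = (real s * (1 - b)\<^sup>2 + (real d - real s) * b\<^sup>2) / m\<^sup>2 + 1
           - 2 * (of_bool (j \<in> S) - b) / m"
proof -
  define z where "z i = (of_bool (i \<in> S) - b) / m" for i
  have "(((if i \<in> S then 1 else 0) - b) / m - (if i = j then 1 else 0))\<^sup>2
      = (z i)\<^sup>2 + (if i = j then 1 - 2 * z j else 0)" for i
    by (auto simp: z_def power2_diff)
  then have "est_loss d m b j S = (\<Sum>i<d. (z i)\<^sup>2) + (1 - 2 * z j)"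
    unfolding est_loss_def using assms(3) by (simp add: sum.distrib)
  moreover have "(\<Sum>i<d. (z i)\<^sup>2) = (\<Sum>i\<in>S. ((1 - b) / m)\<^sup>2) + (\<Sum>i\<in>{..<d} - S. (b / m)\<^sup>2)"
  proof -
    have "(\<Sum>i<d. (z i)\<^sup>2) = (\<Sum>i\<in>S. (z i)\<^sup>2) + (\<Sum>i\<in>{..<d} - S. (z i)\<^sup>2)"
      using assms(1) by (metis finite_lessThan sum.subset_diff add.commute)
    then show ?thesis
      by (simp add: z_def power_divide)
  qed
  moreover have "card ({..<d} - S) = d - s" and "s \<le> d"
    using assms card_mono[OF finite_lessThan assms(1)] by (auto simp: card_Diff_subset finite_subset)
  ultimately have "(\<Sum>i<d. (z i)\<^sup>2) = (real s * (1 - b)\<^sup>2 + (real d - real s) * b\<^sup>2) / m\<^sup>2"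
    using assms(2) by (simp add: power_divide add_divide_distrib)
  with \<open>est_loss d m b j S = (\<Sum>i<d. (z i)\<^sup>2) + (1 - 2 * z j)\<close> show ?thesis
    by (simp add: z_def)
qed

lemma est_loss_debiased:
  assumes "S \<subseteq> {..<d}" and "card S = s" and "j < d" and "d \<ge> 2"
    and "debias_scale d s x \<noteq> 0"
  shows "est_loss d (debias_scale d s x) (debias_offset d s x) j S
       = debiased_risk d s x + 2 * (x - of_bool (j \<in> S)) / debias_scale d s x"
proof -
  define m where "m = debias_scale d s x"
  define \<beta> where "\<beta> = debias_offset d s x"
  have "real d - 1 \<noteq> 0"
    using \<open>d \<ge> 2\<close> by simp
  then have x_eq: "x = m + \<beta>" and s_eq: "real s = m + real d * \<beta>"
    by (simp_all add: m_def \<beta>_def debias_scale_def debias_offset_def divide_simps)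
      (simp_all add: algebra_simps)
  have "m \<noteq> 0"
    using assms(5) by (simp add: m_def)
  (* after substituting x = m + beta and s = m + d beta the identity is polynomial *)
  moreover have "(m + real d * \<beta>) * (1 - \<beta>)\<^sup>2 + (real d - (m + real d * \<beta>)) * \<beta>\<^sup>2 + m\<^sup>2
        - 2 * (z - \<beta>) * m
      = (m + \<beta>) * (1 - (m + \<beta>)) + (real d - 1) * \<beta> * (1 - \<beta>) + 2 * ((m + \<beta>) - z) * m"
    for z :: real
    by algebra
  ultimately have "(real s * (1 - \<beta>)\<^sup>2 + (real d - real s) * \<beta>\<^sup>2) / m\<^sup>2 + 1 - 2 * (z - \<beta>) / m
      = (x * (1 - x) + (real d - 1) * \<beta> * (1 - \<beta>)) / m\<^sup>2 + 2 * (x - z) / m" for z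
    unfolding x_eq s_eq by (simp add: field_simps power2_eq_square)
  then show ?thesis
    using assms(1-3) by (simp add: est_loss_eq m_def \<beta>_def debiased_risk_def debiased_variance_def)
qed

lemma expected_est_loss_debiased:
  fixes w :: "'i \<Rightarrow> real" and S :: "'i \<Rightarrow> nat set"
  assumes "finite I" and "\<And>i. i \<in> I \<Longrightarrow> S i \<in> ss_outputs d s" and "j < d" and "d \<ge> 2"
    and "debias_scale d s x \<noteq> 0"
    and "(\<Sum>i\<in>I. w i) = 1" and "(\<Sum>i\<in>I. w i * of_bool (j \<in> S i)) = x"
  shows "(\<Sum>i\<in>I. w i * est_loss d (debias_scale d s x) (debias_offset d s x) j (S i))
       = debiased_risk d s x"
proof -
  define c where "c = 2 / debias_scale d s x"
  have "(\<Sum>i\<in>I. w i * est_loss d (debias_scale d s x) (debias_offset d s x) j (S i))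
      = (\<Sum>i\<in>I. debiased_risk d s x * w i + c * (x * w i - w i * of_bool (j \<in> S i)))"
    using assms(2-5)
    by (intro sum.cong) (auto simp: c_def ss_outputs_def est_loss_debiased diff_divide_distrib algebra_simps)
  also have "\<dots> = debiased_risk d s x * (\<Sum>i\<in>I. w i)
      + c * (x * (\<Sum>i\<in>I. w i) - (\<Sum>i\<in>I. w i * of_bool (j \<in> S i)))"
    by (simp add: sum.distrib sum_subtractf sum_distrib_left right_diff_distrib)
  finally show ?thesis
    using assms(6,7) by simp
qed

lemma debias_scale_eq:
  assumes "real s = p * real d"
  shows "debias_scale d s z = real d / (real d - 1) * (z - p)"
proof -
  have "real d * z - real s = real d * (z - p)"
    using assms by (simp add: algebra_simps)
  then show ?thesis
    by (simp add: debias_scale_def)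
qed

lemma debiased_variance_ge:
  assumes "0 \<le> x" and "x \<le> 1" and "1 \<le> s" and "real s \<le> real d - 1"
  shows "x * (1 - x) \<le> debiased_variance d s x"
proof -
  have "real d - 1 > 0"
    using assms(3,4) by simp
  then have "0 \<le> debias_offset d s x" and "debias_offset d s x \<le> 1"
    using assms by (simp_all add: debias_offset_def field_simps)
  then show ?thesis
    using \<open>real d - 1 > 0\<close> by (simp add: debiased_variance_def)
qed

lemma debiased_variance_expand:
  assumes "d \<ge> 2"
  shows "debiased_variance d s y = debiased_variance d s x + 2 * debias_scale d s x * (x - y)
           - real d / (real d - 1) * (x - y)\<^sup>2"
proof -
  define c where "c = real d - 1"
  define \<beta> where "\<beta> = debias_offset d s x"
  have "c > 0"
    using assms by (simp add: c_def)
  have offset_y: "debias_offset d s y = \<beta> + (x - y) / c"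
    by (simp add: \<beta>_def c_def debias_offset_def add_divide_distrib[symmetric])
  have scale_x: "debias_scale d s x = x - \<beta>"
    using \<open>c > 0\<close> by (simp add: \<beta>_def debias_scale_def debias_offset_def c_def field_simps)
  have "real d / (real d - 1) = 1 + 1 / c"
    using \<open>c > 0\<close> by (simp add: c_def field_simps)
  then show ?thesis
    using \<open>c > 0\<close>
    by (simp add: debiased_variance_def offset_y scale_x flip: \<beta>_def c_def)
      (simp add: field_simps power2_eq_square)
qed

lemma debiased_risk_le_of_shift:
  fixes lam :: real
  assumes "d \<ge> 2" and "lam \<ge> 0" and "debias_scale d s x > 0" and "debiased_variance d s x \<ge> 0"
    and "debias_scale d s x * (x - y) \<le> lam * debiased_variance d s x"
    and "debias_scale d s x \<le> (1 + lam) * debias_scale d s y"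
  shows "debiased_risk d s y \<le> (1 + 2 * lam) * (1 + lam)\<^sup>2 * debiased_risk d s x"
proof -
  define m m' V V' where "m = debias_scale d s x" and "m' = debias_scale d s y"
    and "V = debiased_variance d s x" and "V' = debiased_variance d s y"
  have "real d / (real d - 1) * (x - y)\<^sup>2 \<ge> 0"
    using assms(1) by simp
  then have V': "V' \<le> (1 + 2 * lam) * V"
    using debiased_variance_expand[OF assms(1), of s y x] assms(5)
    by (simp add: m_def V_def V'_def algebra_simps)
  have "(1 + lam) * m' > 0"
    using assms(3,6) by (simp add: m_def m'_def)
  then have "m' > 0"
    using assms(2) by (simp add: zero_less_mult_iff)
  have "m\<^sup>2 \<le> ((1 + lam) * m')\<^sup>2"
    using assms(3,6) by (simp add: m_def m'_def power_mono)
  then have "m\<^sup>2 \<le> (1 + lam)\<^sup>2 * m'\<^sup>2"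
    by (simp add: power_mult_distrib)
  then have inv: "1 / m'\<^sup>2 \<le> (1 + lam)\<^sup>2 / m\<^sup>2"
    using \<open>m' > 0\<close> assms(3) by (simp add: m_def field_simps)
  have "V' / m'\<^sup>2 \<le> (1 + 2 * lam) * V / m'\<^sup>2"
    using V' by (simp add: divide_right_mono)
  also have "\<dots> = (1 + 2 * lam) * V * (1 / m'\<^sup>2)"
    by simp
  also have "\<dots> \<le> (1 + 2 * lam) * V * ((1 + lam)\<^sup>2 / m\<^sup>2)"
    using inv assms(2,4) by (intro mult_left_mono) (simp_all add: V_def)
  finally show ?thesis
    by (simp add: debiased_risk_def m_def m'_def V_def V'_def mult_ac)
qed

section \<open>Subset selection\<close>

definition ss_cap_prob :: "real \<Rightarrow> real \<Rightarrow> real" where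
  "ss_cap_prob e p = e * p / (e * p + 1 - p)"

lemma ss_cap_prob_divide:
  fixes e a b :: real
  assumes "b > 0"
  shows "ss_cap_prob e (a / b) = e * a / (e * a + b - a)"
proof -
  have "e * (a / b) + 1 - a / b = (e * a + b - a) / b"
    using assms by (simp add: field_simps)
  then show ?thesis
    using assms by (simp add: ss_cap_prob_def)
qed

lemma ss_cap_prob_minus:
  fixes e p :: real
  assumes "e * p + 1 - p > 0"
  shows "ss_cap_prob e p - p = (e - 1) * (p * (1 - p)) / (e * p + 1 - p)"
proof -
  have "e * p / (e * p + 1 - p) - p = (e * p - p * (e * p + 1 - p)) / (e * p + 1 - p)"
    using assms by (simp add: diff_divide_distrib)
  also have "e * p - p * (e * p + 1 - p) = (e - 1) * (p * (1 - p))"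
    by (simp add: algebra_simps)
  finally show ?thesis
    by (simp add: ss_cap_prob_def)
qed

lemma ss_cap_prob_variance:
  fixes e p :: real
  assumes "e * p + 1 - p > 0"
  shows "ss_cap_prob e p * (1 - ss_cap_prob e p) = e * (p * (1 - p)) / (e * p + 1 - p)\<^sup>2"
  using assms by (simp add: ss_cap_prob_def field_simps power2_eq_square)

lemma ss_cap_prob_bounds:
  fixes e p :: real
  assumes "e \<ge> 0" and "0 \<le> p" and "p < 1"
  shows "0 \<le> ss_cap_prob e p" and "ss_cap_prob e p \<le> 1"
proof -
  have "0 \<le> e * p" and "e * p < e * p + 1 - p"
    using assms by simp_all
  then show "0 \<le> ss_cap_prob e p" and "ss_cap_prob e p \<le> 1"
    by (simp_all add: ss_cap_prob_def)
qed

lemma ss_c1_c2_normalized: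
  assumes "1 \<le> s" and "s \<le> d"
  shows "real ((d - 1) choose (s - 1)) * ss_c1 d s eps + real ((d - 1) choose s) * ss_c2 d s eps = 1"
proof -
  define A where "A = real ((d - 1) choose (s - 1))"
  define B where "B = real ((d - 1) choose s)"
  have "A \<ge> 1"
    using assms by (simp add: A_def Suc_leI)
  then have "A * exp eps + B > 0"
    by (simp add: B_def add_pos_nonneg)
  have "A * ss_c1 d s eps + B * ss_c2 d s eps = A * exp eps / (A * exp eps + B) + B / (A * exp eps + B)"
    by (simp add: ss_c1_def ss_c2_def A_def B_def)
  also have "\<dots> = (A * exp eps + B) / (A * exp eps + B)"
    by (simp only: add_divide_distrib)
  also have "\<dots> = 1"
    using \<open>A * exp eps + B > 0\<close> by simp
  finally show ?thesis
    by (simp add: A_def B_def)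
qed

lemma ss_c1_cap_mass:
  assumes "1 \<le> s" and "s \<le> d"
  shows "real ((d - 1) choose (s - 1)) * ss_c1 d s eps = ss_cap_prob (exp eps) (real s / real d)"
proof -
  define A where "A = real ((d - 1) choose (s - 1))"
  define B where "B = real ((d - 1) choose s)"
  have "A \<ge> 1"
    using assms by (simp add: A_def Suc_leI)
  have "s * ((d - 1) choose s) = (d - s) * ((d - 1) choose (s - 1))"
    using assms binomial_absorption[of "s - 1" "d - 1"] binomial_absorb_comp[of "d - 1" "s - 1"]
    by simp
  then have "real s * B = real (d - s) * A"
    unfolding A_def B_def by (metis of_nat_mult)
  then have rel: "(A * exp eps + B) * real s = A * (exp eps * real s + real d - real s)"
    using assms by (simp add: algebra_simps)
  have "A * ss_c1 d s eps = A * exp eps * real s / ((A * exp eps + B) * real s)"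
    using assms by (simp add: ss_c1_def A_def B_def)
  also have "\<dots> = exp eps * real s / (exp eps * real s + real d - real s)"
    unfolding rel using \<open>A \<ge> 1\<close> by simp
  also have "\<dots> = ss_cap_prob (exp eps) (real s / real d)"
    using assms by (simp add: ss_cap_prob_divide)
  finally show ?thesis
    by (simp add: A_def)
qed

lemma ss_q_sums:
  assumes "j < d" and "1 \<le> s" and "s \<le> d"
  shows "(\<Sum>S\<in>ss_outputs d s. q_ss d s eps j S) = 1"
    and "(\<Sum>S\<in>ss_outputs d s. q_ss d s eps j S * of_bool (j \<in> S))
         = ss_cap_prob (exp eps) (real s / real d)"
proof -
  show "(\<Sum>S\<in>ss_outputs d s. q_ss d s eps j S) = 1"
    using assms ss_c1_c2_normalized[OF assms(2,3)]
    by (simp add: q_ss_def sum_if_eq_card finite_ss_outputs card_ss_outputs_mem card_ss_outputs_not_mem)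
  have "(\<Sum>S\<in>ss_outputs d s. q_ss d s eps j S * of_bool (j \<in> S))
      = (\<Sum>S\<in>ss_outputs d s. if j \<in> S then ss_c1 d s eps else 0)"
    by (intro sum.cong) (auto simp: q_ss_def)
  then show "(\<Sum>S\<in>ss_outputs d s. q_ss d s eps j S * of_bool (j \<in> S))
         = ss_cap_prob (exp eps) (real s / real d)"
    using assms ss_c1_cap_mass[OF assms(2,3)]
    by (simp add: sum_if_eq_card finite_ss_outputs card_ss_outputs_mem)
qed

lemma ss_risk_eq_debiased_risk:
  assumes "j < d" and "1 \<le> s" and "s < d" and "eps > 0"
  shows "ss_risk d s eps j = debiased_risk d s (ss_cap_prob (exp eps) (real s / real d))"
proof -
  define g where "g = ss_cap_prob (exp eps) (real s / real d)"
  have "exp eps > 1"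
    using assms by simp
  then have "real s \<le> exp eps * real s"
    using mult_right_mono[of 1 "exp eps" "real s"] by simp
  moreover have "real s < real d"
    using assms(3) by simp
  ultimately have den_pos: "exp eps * real s + real d - real s > 0"
    by linarith
  have g_eq: "g = exp eps * real s / (exp eps * real s + real d - real s)"
    using assms by (simp add: g_def ss_cap_prob_divide)
  have "real d - 1 > 0"
    using assms by simp
  then have m_eq: "m_ss d s eps = debias_scale d s g" and b_eq: "b_ss d s eps = debias_offset d s g"
    using den_pos
    by (simp_all add: g_eq m_ss_def b_ss_def debias_scale_def debias_offset_def field_simps)
  have "m_ss d s eps > 0"
    using assms \<open>exp eps > 1\<close> by (simp add: m_ss_def add_pos_nonneg)
  then show ?thesis
    using expected_est_loss_debiased[of "ss_outputs d s" "\<lambda>S. S" d s j g "q_ss d s eps j"]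
      ss_q_sums[of j d s eps] assms
    by (simp add: ss_risk_def m_eq b_eq g_def finite_ss_outputs)
qed

section \<open>The MMRC mechanism\<close>

definition mmrc_cap_mass :: "real \<Rightarrow> real \<Rightarrow> real \<Rightarrow> real" where
  "mmrc_cap_mass e p \<theta> =
     (if \<theta> \<le> p then e * \<theta> / (e * p + 1 - p) else (e * p + \<theta> - p) / (e * p + 1 - p))"

lemma mmrc_G_eq_sum_cap_mass:
  "mmrc_G d s eps N = (\<Sum>n\<le>N. real (N choose n) * (real s / real d) ^ n * (1 - real s / real d) ^ (N - n)
     * mmrc_cap_mass (exp eps) (real s / real d) (real n / real N))"
  by (simp add: mmrc_G_def mmrc_cap_mass_def Let_def)

(* The MMRC selection probability of a candidate inside (cap) or outside the cap, after
   cancelling ss_c2 using ss_c1 = exp eps * ss_c2. *)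

definition mmrc_weight :: "real \<Rightarrow> real \<Rightarrow> nat \<Rightarrow> real \<Rightarrow> bool \<Rightarrow> real" where
  "mmrc_weight e p N \<theta> cap =
     (let D = e * p + 1 - p in
      if cap then (if \<theta> \<le> p then e / (real N * D) else (1 - (1 - \<theta>) / D) / (real N * \<theta>))
      else (if \<theta> < p then (1 - e * \<theta> / D) / (real N * (1 - \<theta>)) else 1 / (real N * D)))"

lemma mmrc_pi_eq_weight:
  fixes zs :: "nat \<Rightarrow> nat set" and j :: nat
  assumes "N > 0" and "1 \<le> s" and "s \<le> d"
  defines "\<theta> \<equiv> real (card {l\<in>{..<N}. j \<in> zs l}) / real N"
  shows "mmrc_pi d s eps N j zs k = mmrc_weight (exp eps) (real s / real d) N \<theta> (j \<in> zs k)"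
proof -
  define p where "p = real s / real d"
  define c where "c = ss_c2 d s eps"
  define D where "D = exp eps * p + 1 - p"
  have "c > 0"
    using assms by (simp add: c_def ss_c2_def add_pos_nonneg)
  have c1: "ss_c1 d s eps = exp eps * c"
    by (simp add: ss_c1_def ss_c2_def c_def)
  have "p * ss_c1 d s eps + (1 - p) * c = c * D"
    by (simp add: c1 D_def algebra_simps)
  then have tu: "ss_c1 d s eps / (real N * (p * ss_c1 d s eps + (1 - p) * c)) = exp eps / (real N * D)"
    and tl: "c / (real N * (p * ss_c1 d s eps + (1 - p) * c)) = 1 / (real N * D)"
    using \<open>c > 0\<close> by (simp_all add: c1)
  show ?thesis
    unfolding mmrc_pi_def Let_def \<theta>_def[symmetric] p_def[symmetric] c_def[symmetric]
    using \<open>N > 0\<close> by (cases rule: linorder_cases[of \<theta> p]) (simp_all add: mmrc_weight_def tu tl D_def)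
qed

lemma mmrc_cap_mass_eq:
  fixes e p \<theta> :: real
  assumes "e * p + 1 - p > 0"
  shows "mmrc_cap_mass e p \<theta>
       = (if \<theta> \<le> p then e * \<theta> / (e * p + 1 - p) else 1 - (1 - \<theta>) / (e * p + 1 - p))"
proof -
  define D where "D = e * p + 1 - p"
  have "D > 0"
    using assms by (simp add: D_def)
  then have "1 - (1 - \<theta>) / D = (D - (1 - \<theta>)) / D"
    by (simp add: diff_divide_distrib)
  also have "D - (1 - \<theta>) = e * p + \<theta> - p"
    by (simp add: D_def)
  finally show ?thesis
    by (simp add: mmrc_cap_mass_def flip: D_def)
qed

lemma mmrc_weight_masses:
  fixes e p \<theta> :: real and N :: nat
  assumes "N > 0" and "0 < p" and "p < 1" and "e > 0"
  shows "real N * \<theta> * mmrc_weight e p N \<theta> True = mmrc_cap_mass e p \<theta>"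
    and "real N * (1 - \<theta>) * mmrc_weight e p N \<theta> False = 1 - mmrc_cap_mass e p \<theta>"
proof -
  define D where "D = e * p + 1 - p"
  have "e * p > 0"
    using assms(2,4) by simp
  then have "D > 0"
    using assms(3) by (simp add: D_def)
  note mass = mmrc_cap_mass_eq[OF \<open>D > 0\<close>[unfolded D_def], of \<theta>, folded D_def]
  show "real N * \<theta> * mmrc_weight e p N \<theta> True = mmrc_cap_mass e p \<theta>"
  proof (cases "\<theta> \<le> p")
    case False
    then have "\<theta> > 0"
      using assms(2) by linarith
    then show ?thesis
      using False \<open>N > 0\<close> by (simp add: mmrc_weight_def mass flip: D_def)
  qed (use \<open>N > 0\<close> \<open>D > 0\<close> in \<open>simp add: mmrc_weight_def mass flip: D_def\<close>)
  show "real N * (1 - \<theta>) * mmrc_weight e p N \<theta> False = 1 - mmrc_cap_mass e p \<theta>"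
  proof (cases rule: linorder_cases[of \<theta> p])
    case less
    then have "1 - \<theta> > 0"
      using assms(3) by linarith
    then show ?thesis
      using less \<open>N > 0\<close> by (simp add: mmrc_weight_def mass flip: D_def)
  next
    case equal
    then have "1 - mmrc_cap_mass e p \<theta> = (D - e * p) / D"
      using \<open>D > 0\<close> mass by (simp add: diff_divide_distrib)
    also have "D - e * p = 1 - \<theta>"
      using equal by (simp add: D_def)
    finally show ?thesis
      using \<open>N > 0\<close> equal by (simp add: mmrc_weight_def flip: D_def)
  next
    case greater
    then show ?thesis
      using \<open>N > 0\<close> by (simp add: mmrc_weight_def mass flip: D_def)
  qed
qed

lemma mmrc_pi_sums:
  fixes zs :: "nat \<Rightarrow> nat set" and j :: nat
  assumes "N > 0" and "1 \<le> s" and "s < d"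
  defines "\<theta> \<equiv> real (card {l\<in>{..<N}. j \<in> zs l}) / real N"
  shows "(\<Sum>k<N. mmrc_pi d s eps N j zs k) = 1"
    and "(\<Sum>k<N. mmrc_pi d s eps N j zs k * of_bool (j \<in> zs k))
         = mmrc_cap_mass (exp eps) (real s / real d) \<theta>"
proof -
  define p where "p = real s / real d"
  define n where "n = card {l\<in>{..<N}. j \<in> zs l}"
  define w where "w = mmrc_weight (exp eps) p N \<theta>"
  have pi_eq: "mmrc_pi d s eps N j zs k = (if j \<in> zs k then w True else w False)" for k
    using mmrc_pi_eq_weight[OF assms(1,2)] assms(3) by (simp add: w_def p_def \<theta>_def)
  have "n \<le> N"
    unfolding n_def using card_mono[of "{..<N}" "{l\<in>{..<N}. j \<in> zs l}"] by auto
  then have "real n = real N * \<theta>" and "real (N - n) = real N * (1 - \<theta>)"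
    using \<open>N > 0\<close> by (simp_all add: \<theta>_def n_def of_nat_diff algebra_simps)
  moreover have "0 < p" and "p < 1"
    using assms by (simp_all add: p_def)
  ultimately have cap_mass: "real n * w True = mmrc_cap_mass (exp eps) p \<theta>"
    and rest_mass: "real (N - n) * w False = 1 - mmrc_cap_mass (exp eps) p \<theta>"
    using mmrc_weight_masses[OF \<open>N > 0\<close>, of p "exp eps" \<theta>] by (simp_all add: w_def)
  have "{k\<in>{..<N}. j \<notin> zs k} = {..<N} - {l\<in>{..<N}. j \<in> zs l}"
    and "{l\<in>{..<N}. j \<in> zs l} \<subseteq> {..<N}"
    by auto
  then have "card {k\<in>{..<N}. j \<notin> zs k} = N - n"
    unfolding n_def by (simp add: card_Diff_subset)
  then have "(\<Sum>k<N. mmrc_pi d s eps N j zs k) = real n * w True + real (N - n) * w False"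
    by (simp add: pi_eq sum_if_eq_card n_def)
  then show "(\<Sum>k<N. mmrc_pi d s eps N j zs k) = 1"
    using cap_mass rest_mass by simp
  have "(\<Sum>k<N. mmrc_pi d s eps N j zs k * of_bool (j \<in> zs k)) = (\<Sum>k<N. if j \<in> zs k then w True else 0)"
    by (intro sum.cong) (auto simp: pi_eq)
  then show "(\<Sum>k<N. mmrc_pi d s eps N j zs k * of_bool (j \<in> zs k))
         = mmrc_cap_mass (exp eps) (real s / real d) \<theta>"
    using cap_mass by (simp add: sum_if_eq_card n_def p_def)
qed

lemma mmrc_expected_cap_mass:
  assumes "j < d" and "1 \<le> s" and "s < d" and "N > 0"
  shows "(\<Sum>zs\<in>PiE {..<N} (\<lambda>_. ss_outputs d s). \<Sum>k<N. mmrc_pi d s eps N j zs k * of_bool (j \<in> zs k))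
       = real (card (ss_outputs d s)) ^ N * mmrc_G d s eps N"
proof -
  define T where "T = real (card (ss_outputs d s))"
  define p where "p = real s / real d"
  define f where "f n = mmrc_cap_mass (exp eps) p (real n / real N)" for n
  have "(\<Sum>zs\<in>PiE {..<N} (\<lambda>_. ss_outputs d s). \<Sum>k<N. mmrc_pi d s eps N j zs k * of_bool (j \<in> zs k))
      = (\<Sum>zs\<in>PiE {..<N} (\<lambda>_. ss_outputs d s). f (card {l\<in>{..<N}. j \<in> zs l}))"
    using assms by (intro sum.cong) (simp_all add: mmrc_pi_sums f_def p_def del: sum_mult_of_bool_eq)
  also have "\<dots> = (\<Sum>n\<le>N. real (N choose n) * (p * T) ^ n * ((1 - p) * T) ^ (N - n) * f n)"
    using sum_PiE_count_binomial[OF finite_ss_outputs, where N = N and F = f and P = "\<lambda>S. j \<in> S"]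
      card_ss_outputs_mem_fraction[OF \<open>j < d\<close> \<open>1 \<le> s\<close>]
    by (simp add: T_def p_def)
  also have "\<dots> = T ^ N * (\<Sum>n\<le>N. real (N choose n) * p ^ n * (1 - p) ^ (N - n) * f n)"
    unfolding sum_distrib_left
  proof (intro sum.cong refl)
    fix n assume "n \<in> {..N}"
    then have "T ^ N = T ^ n * T ^ (N - n)"
      by (simp flip: power_add)
    then show "real (N choose n) * (p * T) ^ n * ((1 - p) * T) ^ (N - n) * f n
        = T ^ N * (real (N choose n) * p ^ n * (1 - p) ^ (N - n) * f n)"
      by (simp add: power_mult_distrib mult_ac)
  qed
  finally show ?thesis
    by (simp add: mmrc_G_eq_sum_cap_mass T_def p_def f_def)
qed

lemma mmrc_risk_eq_debiased_risk:
  assumes "j < d" and "1 \<le> s" and "s < d" and "N > 0"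
    and "debias_scale d s (mmrc_G d s eps N) \<noteq> 0"
  shows "mmrc_risk d s eps N j = debiased_risk d s (mmrc_G d s eps N)"
proof -
  define G where "G = mmrc_G d s eps N"
  define T where "T = real (card (ss_outputs d s))"
  define I where "I = PiE {..<N} (\<lambda>_. ss_outputs d s) \<times> {..<N}"
  define w where "w = (\<lambda>(zs, k). mmrc_pi d s eps N j zs k / T ^ N)"
  define pick :: "(nat \<Rightarrow> nat set) \<times> nat \<Rightarrow> nat set" where "pick = (\<lambda>(zs, k). zs k)"
  have "T > 0"
    using assms by (simp add: T_def card_ss_outputs)
  have "(\<Sum>i\<in>I. w i) = (\<Sum>zs\<in>PiE {..<N} (\<lambda>_. ss_outputs d s). \<Sum>k<N. mmrc_pi d s eps N j zs k) / T ^ N"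
    by (simp add: I_def w_def sum_divide_distrib flip: sum.cartesian_product)
  also have "\<dots> = 1"
    using assms \<open>T > 0\<close> by (simp add: mmrc_pi_sums T_def card_PiE)
  finally have w_sum: "(\<Sum>i\<in>I. w i) = 1" .
  have "(\<Sum>i\<in>I. w i * of_bool (j \<in> pick i))
      = (\<Sum>(zs, k)\<in>I. mmrc_pi d s eps N j zs k * of_bool (j \<in> zs k) / T ^ N)"
    by (intro sum.cong) (auto simp: w_def pick_def)
  also have "\<dots> = (\<Sum>zs\<in>PiE {..<N} (\<lambda>_. ss_outputs d s).
      \<Sum>k<N. mmrc_pi d s eps N j zs k * of_bool (j \<in> zs k)) / T ^ N"
    by (simp add: I_def sum_divide_distrib del: sum_mult_of_bool_eq flip: sum.cartesian_product)
  also have "\<dots> = G"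
    using assms \<open>T > 0\<close> by (simp add: mmrc_expected_cap_mass T_def G_def del: sum_mult_of_bool_eq)
  finally have w_cap: "(\<Sum>i\<in>I. w i * of_bool (j \<in> pick i)) = G" .
  have m_eq: "m_mmrc d s eps N = debias_scale d s G" and b_eq: "b_mmrc d s eps N = debias_offset d s G"
    by (simp_all add: G_def m_mmrc_def b_mmrc_def debias_scale_def debias_offset_def diff_divide_distrib)
  have "mmrc_risk d s eps N j
      = (\<Sum>(zs, k)\<in>I. mmrc_pi d s eps N j zs k * est_loss d (debias_scale d s G) (debias_offset d s G) j (zs k) / T ^ N)"
    by (simp add: mmrc_risk_def m_eq b_eq I_def T_def sum_divide_distrib flip: sum.cartesian_product)
  also have "\<dots> = (\<Sum>i\<in>I. w i * est_loss d (debias_scale d s G) (debias_offset d s G) j (pick i))"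
    by (intro sum.cong) (auto simp: w_def pick_def)
  also have "\<dots> = debiased_risk d s G"
    by (rule expected_est_loss_debiased)
      (use assms w_sum w_cap in \<open>auto simp: I_def pick_def G_def PiE_iff finite_PiE finite_ss_outputs\<close>)
  finally show ?thesis
    by (simp add: G_def)
qed

lemma sum_binomial_mmrc_cap_mass:
  fixes e p :: real
  assumes "N > 0"
  shows "(\<Sum>n\<le>N. real (N choose n) * p ^ n * (1 - p) ^ (N - n) * mmrc_cap_mass e p (real n / real N))
       = ss_cap_prob e p - (e - 1) / (e * p + 1 - p) * binomial_shortfall N p"
proof -
  define D where "D = e * p + 1 - p"
  define w where "w n = real (N choose n) * p ^ n * (1 - p) ^ (N - n)" for n
  have mass: "mmrc_cap_mass e p \<theta> = ss_cap_prob e p + (\<theta> - p) / D - (e - 1) / D * max 0 (p - \<theta>)"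
    for \<theta>
  proof -
    have "ss_cap_prob e p + (\<theta> - p) / D - (e - 1) / D * max 0 (p - \<theta>)
        = (e * p + (\<theta> - p) - (e - 1) * max 0 (p - \<theta>)) / D"
      by (simp only: ss_cap_prob_def D_def times_divide_eq_left flip: add_divide_distrib diff_divide_distrib)
    then show ?thesis
      by (simp add: mmrc_cap_mass_def D_def max_def algebra_simps)
  qed
  have "(\<Sum>n\<le>N. w n * mmrc_cap_mass e p (real n / real N))
      = (\<Sum>n\<le>N. ss_cap_prob e p * w n + w n * (real n / real N - p) / D
           - (e - 1) / D * (w n * max 0 (p - real n / real N)))"
    by (intro sum.cong) (simp_all add: mass algebra_simps)
  also have "\<dots> = ss_cap_prob e p * (\<Sum>n\<le>N. w n) + (\<Sum>n\<le>N. w n * (real n / real N - p)) / D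
        - (e - 1) / D * binomial_shortfall N p"
    by (simp add: binomial_shortfall_def w_def sum.distrib sum_subtractf sum_distrib_left sum_divide_distrib)
  finally show ?thesis
    using binomial_centered_mean[OF assms, of p] by (simp add: w_def binomial_weights_sum D_def)
qed

lemma mmrc_G_eq_shortfall:
  assumes "N > 0"
  shows "mmrc_G d s eps N = ss_cap_prob (exp eps) (real s / real d)
           - (exp eps - 1) / (exp eps * (real s / real d) + 1 - real s / real d)
             * binomial_shortfall N (real s / real d)"
  using sum_binomial_mmrc_cap_mass[OF assms] by (simp add: mmrc_G_eq_sum_cap_mass)

section \<open>Comparison of the risks\<close>

lemma scaled_shortfall_le_of_sample_size:
  fixes e lam \<delta> :: real and N :: nat
  assumes "N > 0" and "lam > 0" and "e > 1" and "16 * real N * \<delta>\<^sup>2 \<le> 1"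
    and "(1 + e)\<^sup>2 * (1 + lam)\<^sup>2 \<le> real N * lam\<^sup>2"
  shows "2 * (e - 1)\<^sup>2 * \<delta> \<le> lam * e"
proof -
  have "1 \<le> (1 + lam)\<^sup>2"
    using assms(2) by (simp add: one_le_power)
  then have "(1 + e)\<^sup>2 \<le> (1 + e)\<^sup>2 * (1 + lam)\<^sup>2"
    using mult_left_mono[of 1 "(1 + lam)\<^sup>2" "(1 + e)\<^sup>2"] by simp
  with assms(5) have N_large: "(1 + e)\<^sup>2 \<le> real N * lam\<^sup>2"
    by linarith
  define a where "a = (e - 1)\<^sup>2"
  have "0 \<le> a"
    by (simp add: a_def)
  have "a \<le> e * (1 + e)"
    using assms(3) by (simp add: a_def power2_eq_square algebra_simps)
  have "real N * (2 * a * \<delta>)\<^sup>2 = a\<^sup>2 * (16 * real N * \<delta>\<^sup>2) / 4"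
    by (simp add: power2_eq_square)
  also have "\<dots> \<le> a\<^sup>2 * 1 / 4"
    using assms(4) by (intro divide_right_mono mult_left_mono) auto
  also have "\<dots> \<le> a\<^sup>2"
    by simp
  also have "\<dots> \<le> (e * (1 + e))\<^sup>2"
    using power_mono[OF \<open>a \<le> e * (1 + e)\<close> \<open>0 \<le> a\<close>] .
  also have "\<dots> = e\<^sup>2 * (1 + e)\<^sup>2"
    by (simp add: power_mult_distrib)
  also have "\<dots> \<le> e\<^sup>2 * (real N * lam\<^sup>2)"
    using N_large by (intro mult_left_mono) auto
  also have "\<dots> = real N * (lam * e)\<^sup>2"
    by (simp add: power_mult_distrib)
  finally have "(2 * a * \<delta>)\<^sup>2 \<le> (lam * e)\<^sup>2"
    by (rule mult_left_le_imp_le) (use \<open>N > 0\<close> in simp)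
  then have "2 * a * \<delta> \<le> lam * e"
    by (rule power2_le_imp_le) (use assms(2,3) in simp)
  then show ?thesis
    by (simp only: a_def)
qed

lemma shortfall_le_of_sample_size:
  fixes e lam \<delta> v :: real and N :: nat
  assumes "N > 0" and "lam > 0" and "e > 1" and "4 * real N * \<delta>\<^sup>2 \<le> v"
    and "1 / (2 * (1 + e)) \<le> v" and "(1 + e)\<^sup>2 * (1 + lam)\<^sup>2 \<le> real N * lam\<^sup>2"
  shows "(1 + lam) * \<delta> \<le> lam * v"
proof -
  have "1 / 4 \<le> (1 + e) / 2"
    using assms(3) by simp
  also have "\<dots> = (1 + e)\<^sup>2 * (1 / (2 * (1 + e)))"
    using assms(3) by (simp add: power2_eq_square field_simps)
  also have "\<dots> \<le> (1 + e)\<^sup>2 * v"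
    using assms(5) by (intro mult_left_mono) auto
  finally have "1 / 4 \<le> (1 + e)\<^sup>2 * v" .
  have "0 \<le> 4 * real N * \<delta>\<^sup>2"
    by simp
  then have "v \<ge> 0"
    using assms(4) by linarith
  have "real N * ((1 + lam) * \<delta>)\<^sup>2 = (1 + lam)\<^sup>2 * (4 * real N * \<delta>\<^sup>2) * (1 / 4)"
    by (simp add: power_mult_distrib)
  also have "\<dots> \<le> (1 + lam)\<^sup>2 * v * (1 / 4)"
    using assms(4) by (intro mult_right_mono mult_left_mono) auto
  also have "\<dots> \<le> (1 + lam)\<^sup>2 * v * ((1 + e)\<^sup>2 * v)"
    using \<open>1 / 4 \<le> (1 + e)\<^sup>2 * v\<close> \<open>v \<ge> 0\<close> by (intro mult_left_mono) auto
  also have "\<dots> = (1 + e)\<^sup>2 * (1 + lam)\<^sup>2 * v\<^sup>2"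
    by (simp add: power2_eq_square)
  also have "\<dots> \<le> real N * lam\<^sup>2 * v\<^sup>2"
    using assms(6) by (intro mult_right_mono) auto
  also have "\<dots> = real N * (lam * v)\<^sup>2"
    by (simp add: power_mult_distrib)
  finally have "((1 + lam) * \<delta>)\<^sup>2 \<le> (lam * v)\<^sup>2"
    by (rule mult_left_le_imp_le) (use \<open>N > 0\<close> in simp)
  then show ?thesis
    by (rule power2_le_imp_le) (use assms(2) \<open>v \<ge> 0\<close> in simp)
qed
lemma mult_one_minus_bounds:
  fixes e p :: real
  assumes "e > 0" and "1 / (1 + e) \<le> p" and "p \<le> 1 / 2"
  shows "1 / (2 * (1 + e)) \<le> p * (1 - p)" and "p * (1 - p) \<le> 1 / 4"
proof -
  have "1 / (1 + e) > 0"
    using assms(1) by simp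
  then have "p > 0"
    using assms(2) by linarith
  have "1 / (2 * (1 + e)) = 1 / (1 + e) * (1 / 2)"
    by simp
  also have "\<dots> \<le> p * (1 - p)"
    using assms \<open>p > 0\<close> by (intro mult_mono) auto
  finally show "1 / (2 * (1 + e)) \<le> p * (1 - p)" .
  show "p * (1 - p) \<le> 1 / 4"
    using zero_le_power2[of "p - 1 / 2"] by (simp add: power2_eq_square algebra_simps)
qed

lemma debias_scale_shortfall:
  fixes e p \<delta> :: real
  assumes "d \<ge> 2" and "real s = p * real d" and "e > 1" and "e * p + 1 - p > 0"
  defines "c \<equiv> real d / (real d - 1) * ((e - 1) / (e * p + 1 - p))"
  shows "0 < c" and "c \<le> 2 * ((e - 1) / (e * p + 1 - p))"
    and "debias_scale d s (ss_cap_prob e p) = c * (p * (1 - p))"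
    and "debias_scale d s (ss_cap_prob e p - (e - 1) / (e * p + 1 - p) * \<delta>) = c * (p * (1 - p) - \<delta>)"
proof -
  have ratio_pos: "real d / (real d - 1) > 0" and ratio_le: "real d / (real d - 1) \<le> 2"
    using assms(1) by (simp_all add: pos_divide_le_eq)
  have "(e - 1) / (e * p + 1 - p) > 0"
    using assms(3,4) by simp
  show "0 < c"
    unfolding c_def using ratio_pos \<open>(e - 1) / (e * p + 1 - p) > 0\<close> by (rule mult_pos_pos)
  show "c \<le> 2 * ((e - 1) / (e * p + 1 - p))"
    unfolding c_def using ratio_le \<open>(e - 1) / (e * p + 1 - p) > 0\<close> by (intro mult_right_mono) simp_all
  note g_minus_p = ss_cap_prob_minus[OF assms(4)]
  show "debias_scale d s (ss_cap_prob e p) = c * (p * (1 - p))"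
    using debias_scale_eq[OF assms(2)] g_minus_p by (simp add: c_def mult_ac)
  have "ss_cap_prob e p - (e - 1) / (e * p + 1 - p) * \<delta> - p
      = (ss_cap_prob e p - p) - (e - 1) * \<delta> / (e * p + 1 - p)"
    by simp
  also have "\<dots> = (e - 1) * (p * (1 - p) - \<delta>) / (e * p + 1 - p)"
    unfolding g_minus_p by (simp add: right_diff_distrib diff_divide_distrib)
  finally show "debias_scale d s (ss_cap_prob e p - (e - 1) / (e * p + 1 - p) * \<delta>) = c * (p * (1 - p) - \<delta>)"
    using debias_scale_eq[OF assms(2)] by (simp add: c_def mult_ac)
qed

lemma debias_scale_mult_shortfall_le:
  fixes e p lam \<delta> :: real
  assumes "d \<ge> 2" and "real s = p * real d" and "e > 1" and "0 < p" and "p < 1"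
    and "\<delta> \<ge> 0" and "2 * (e - 1)\<^sup>2 * \<delta> \<le> lam * e"
  defines "g \<equiv> ss_cap_prob e p" and "G \<equiv> ss_cap_prob e p - (e - 1) / (e * p + 1 - p) * \<delta>"
  shows "debias_scale d s g * (g - G) \<le> lam * (g * (1 - g))"
proof -
  define D where "D = e * p + 1 - p"
  define q where "q = p * (1 - p)"
  define c where "c = real d / (real d - 1) * ((e - 1) / D)"
  have "e * p > 0"
    using assms(3,4) by simp
  then have "D > 0"
    using assms(5) by (simp add: D_def)
  have "q > 0"
    using assms(4,5) by (simp add: q_def)
  note scales = debias_scale_shortfall[OF assms(1-3) \<open>D > 0\<close>[unfolded D_def],
      folded D_def c_def q_def g_def]
  have "g - G = (e - 1) * \<delta> / D"
    by (simp add: g_def G_def D_def)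
  then have "debias_scale d s g * (g - G) = c * ((e - 1) * \<delta>) * q / D"
    by (simp add: scales(3) mult_ac)
  also have "\<dots> \<le> 2 * ((e - 1) / D) * ((e - 1) * \<delta>) * q / D"
    using scales(2) \<open>q > 0\<close> \<open>D > 0\<close> assms(3,6) by (intro divide_right_mono mult_right_mono) auto
  also have "\<dots> = 2 * (e - 1)\<^sup>2 * \<delta> * q / D\<^sup>2"
    by (simp add: power2_eq_square)
  also have "\<dots> \<le> lam * e * q / D\<^sup>2"
    using assms(7) \<open>q > 0\<close> by (intro divide_right_mono mult_right_mono) auto
  also have "\<dots> = lam * (g * (1 - g))"
    using ss_cap_prob_variance \<open>D > 0\<close> by (simp add: g_def q_def D_def)
  finally show ?thesis .
qed

lemma debiased_risk_shortfall_le_of_bounds: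
  fixes e p lam \<delta> :: real and d s :: nat
  assumes "d \<ge> 2" and "1 \<le> s" and "real s = p * real d"
    and "e > 1" and "0 < p" and "p \<le> 1 / 2" and "lam > 0" and "\<delta> \<ge> 0"
    and "2 * (e - 1)\<^sup>2 * \<delta> \<le> lam * e" and "(1 + lam) * \<delta> \<le> lam * (p * (1 - p))"
  defines "g \<equiv> ss_cap_prob e p" and "G \<equiv> ss_cap_prob e p - (e - 1) / (e * p + 1 - p) * \<delta>"
  shows "debias_scale d s G > 0"
    and "debiased_risk d s G \<le> (1 + 2 * lam) * (1 + lam)\<^sup>2 * debiased_risk d s g"
proof -
  define q where "q = p * (1 - p)"
  define c where "c = real d / (real d - 1) * ((e - 1) / (e * p + 1 - p))"
  have "e * p > 0"
    using assms(4,5) by simp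
  then have D_pos: "e * p + 1 - p > 0"
    using assms(6) by simp
  have "q > 0"
    using assms(5,6) by (simp add: q_def)
  note scales = debias_scale_shortfall[OF assms(1,3,4) D_pos, folded c_def q_def g_def]
  have scale_G: "debias_scale d s G = c * (q - \<delta>)"
    unfolding G_def c_def q_def by (rule debias_scale_shortfall(4)[OF assms(1,3,4) D_pos])
  have "q \<le> (1 + lam) * (q - \<delta>)"
    using assms(10) by (simp add: q_def algebra_simps)
  then have scale_le: "debias_scale d s g \<le> (1 + lam) * debias_scale d s G"
    using scales(1) mult_left_mono[of q "(1 + lam) * (q - \<delta>)" c] by (simp add: scales(3) scale_G mult_ac)
  then have "(1 + lam) * (q - \<delta>) > 0"
    using \<open>q \<le> (1 + lam) * (q - \<delta>)\<close> \<open>q > 0\<close> by linarith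
  then show "debias_scale d s G > 0"
    using assms(7) scales(1) by (simp add: scale_G zero_less_mult_iff)
  have "p * real d \<le> 1 / 2 * real d"
    using assms(6) by (intro mult_right_mono) auto
  then have "real s \<le> real d - 1"
    using assms(1,3) by linarith
  moreover have "0 \<le> g" and "g \<le> 1"
    using ss_cap_prob_bounds[of e p] assms(4,5,6) by (simp_all add: g_def)
  ultimately have var_lower: "g * (1 - g) \<le> debiased_variance d s g"
    using assms(2) by (intro debiased_variance_ge)
  have "debias_scale d s g * (g - G) \<le> lam * (g * (1 - g))"
    using debias_scale_mult_shortfall_le[OF assms(1,3,4,5) _ assms(8,9)] assms(6)
    by (simp add: g_def G_def)
  also have "\<dots> \<le> lam * debiased_variance d s g"
    using var_lower assms(7) by (intro mult_left_mono) auto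
  finally have shift: "debias_scale d s g * (g - G) \<le> lam * debiased_variance d s g" .
  have "0 < debias_scale d s g"
    using scales(1) \<open>q > 0\<close> by (simp add: scales(3))
  moreover have "0 \<le> g * (1 - g)"
    using \<open>0 \<le> g\<close> \<open>g \<le> 1\<close> by simp
  ultimately show "debiased_risk d s G \<le> (1 + 2 * lam) * (1 + lam)\<^sup>2 * debiased_risk d s g"
    using debiased_risk_le_of_shift[OF assms(1)] assms(7) shift scale_le var_lower by simp
qed

lemma debiased_risk_shortfall_le:
  fixes e p lam \<delta> :: real and d s N :: nat
  assumes "d \<ge> 2" and "1 \<le> s" and "real s = p * real d"
    and "e > 1" and "1 / (1 + e) \<le> p" and "p \<le> 1 / 2" and "lam > 0"
    and "\<delta> \<ge> 0" and "4 * real N * \<delta>\<^sup>2 \<le> p * (1 - p)"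
    and "N > 0" and "(1 + e)\<^sup>2 * (1 + lam)\<^sup>2 \<le> real N * lam\<^sup>2"
  defines "G \<equiv> ss_cap_prob e p - (e - 1) / (e * p + 1 - p) * \<delta>"
  shows "debias_scale d s G > 0"
    and "debiased_risk d s G
         \<le> (1 + 4 * lam + 5 * lam\<^sup>2 + 2 * lam ^ 3) * debiased_risk d s (ss_cap_prob e p)"
proof -
  have "1 / (1 + e) > 0"
    using assms(4) by simp
  then have "p > 0"
    using assms(5) by linarith
  have "e > 0"
    using assms(4) by simp
  note pq_bounds = mult_one_minus_bounds[OF this assms(5,6)]
  have "16 * real N * \<delta>\<^sup>2 \<le> 1"
    using assms(9) pq_bounds(2) by linarith
  note bounds = debiased_risk_shortfall_le_of_bounds[OF assms(1-4) \<open>p > 0\<close> assms(6-8)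
      scaled_shortfall_le_of_sample_size[OF assms(10,7,4) this assms(11)]
      shortfall_le_of_sample_size[OF assms(10,7,4,9) pq_bounds(1) assms(11)], folded G_def]
  show "debias_scale d s G > 0"
    by (rule bounds(1))
  have "(1 + 2 * lam) * (1 + lam)\<^sup>2 = 1 + 4 * lam + 5 * lam\<^sup>2 + 2 * lam ^ 3"
    by (simp add: power2_eq_square power3_eq_cube algebra_simps)
  then show "debiased_risk d s G
         \<le> (1 + 4 * lam + 5 * lam\<^sup>2 + 2 * lam ^ 3) * debiased_risk d s (ss_cap_prob e p)"
    using bounds(2) by simp
qed
lemma ceiling_subset_size_bounds:
  fixes d :: nat and e :: real
  assumes "d \<ge> 2" and "e \<ge> 2"
  shows "1 \<le> nat \<lceil>real d / (1 + e)\<rceil>" and "real d / (1 + e) \<le> real (nat \<lceil>real d / (1 + e)\<rceil>)"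
    and "2 * nat \<lceil>real d / (1 + e)\<rceil> \<le> d"
proof -
  define x where "x = real d / (1 + e)"
  have "x > 0"
    using assms(1,2) by (simp add: x_def)
  then have "\<lceil>x\<rceil> \<ge> 1"
    by (simp add: one_le_ceiling)
  then have ceiling_eq: "real (nat \<lceil>x\<rceil>) = real_of_int \<lceil>x\<rceil>"
    by simp
  have "1 \<le> nat \<lceil>x\<rceil>"
    using \<open>\<lceil>x\<rceil> \<ge> 1\<close> by arith
  then show "1 \<le> nat \<lceil>real d / (1 + e)\<rceil>"
    by (simp add: x_def)
  show "real d / (1 + e) \<le> real (nat \<lceil>real d / (1 + e)\<rceil>)"
    using ceiling_eq by (simp flip: x_def)
  have "x \<le> real d / 3"
    unfolding x_def using assms(2) by (intro divide_left_mono) auto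
  then have bound: "real (2 * nat \<lceil>x\<rceil>) < 2 * real d / 3 + 2"
    using ceiling_eq ceiling_correct[of x] by simp
  have "2 * nat \<lceil>x\<rceil> < d + 1"
  proof (cases "d = 2")
    case True
    then have "real (2 * nat \<lceil>x\<rceil>) < real (4 :: nat)"
      using bound by simp
    then have "2 * nat \<lceil>x\<rceil> < 4"
      by (simp only: of_nat_less_iff)
    then show ?thesis
      using True by simp
  next
    case False
    then have "real (2 * nat \<lceil>x\<rceil>) < real (d + 1)"
      using bound assms(1) by simp
    then show ?thesis
      by (simp only: of_nat_less_iff)
  qed
  then show "2 * nat \<lceil>real d / (1 + e)\<rceil> \<le> d"
    by (simp add: x_def)
qed

lemma sample_size_bound:
  fixes e lam :: real and N :: nat
  assumes "e \<ge> 0" and "lam > 0"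
    and "real N \<ge> 2 * (e + 1)\<^sup>2 * (1 + lam)\<^sup>2 / (0.24\<^sup>2 * lam\<^sup>2) * ln (8 * (1 + lam) / (0.24 * lam))"
  shows "(1 + e)\<^sup>2 * (1 + lam)\<^sup>2 \<le> real N * lam\<^sup>2" and "N > 0"
proof -
  define L where "L = ln (8 * (1 + lam) / (0.24 * lam))"
  have "3 \<le> 8 * (1 + lam) / (0.24 * lam)"
    using assms(2) by (simp add: field_simps)
  then have "exp 1 \<le> 8 * (1 + lam) / (0.24 * lam)"
    using exp_le by linarith
  then have "1 \<le> L"
    unfolding L_def by (metis exp_gt_zero ln_exp ln_le_cancel_iff order_less_le_trans)
  then have "1 \<le> 2 / 0.24\<^sup>2 * L"
    by (simp add: power2_eq_square)
  then have "(e + 1)\<^sup>2 * (1 + lam)\<^sup>2 / lam\<^sup>2 \<le> (e + 1)\<^sup>2 * (1 + lam)\<^sup>2 / lam\<^sup>2 * (2 / 0.24\<^sup>2 * L)"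
    using mult_left_mono[of 1 "2 / 0.24\<^sup>2 * L" "(e + 1)\<^sup>2 * (1 + lam)\<^sup>2 / lam\<^sup>2"] by simp
  also have "\<dots> \<le> real N"
    using assms(3) by (simp add: L_def field_simps)
  finally show large: "(1 + e)\<^sup>2 * (1 + lam)\<^sup>2 \<le> real N * lam\<^sup>2"
    using assms(2) by (simp add: field_simps)
  have "(1 + e)\<^sup>2 * (1 + lam)\<^sup>2 > 0"
    using assms(1,2) by (intro mult_pos_pos) simp_all
  with large have "real N * lam\<^sup>2 > 0"
    by linarith
  then show "N > 0"
    by (simp add: zero_less_mult_iff)
qed

theorem theorem7:
  fixes d N j :: nat and eps lam :: real
  assumes "d \<ge> 2" and "eps \<ge> 1" and "lam > 0" and "j < d"
    and "real N \<ge> 2 * (exp eps + 1)\<^sup>2 * (1 + lam)\<^sup>2 / (0.24\<^sup>2 * lam\<^sup>2)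
                   * ln (8 * (1 + lam) / (0.24 * lam))"
  shows "mmrc_risk d (nat \<lceil>real d / (1 + exp eps)\<rceil>) eps N j
         \<le> (1 + 4 * lam + 5 * lam\<^sup>2 + 2 * lam ^ 3)
            * ss_risk d (nat \<lceil>real d / (1 + exp eps)\<rceil>) eps j"
proof -
  define s where "s = nat \<lceil>real d / (1 + exp eps)\<rceil>"
  define p where "p = real s / real d"
  have "exp eps \<ge> 2"
    using assms(2) exp_ge_add_one_self[of eps] by linarith
  note s_bounds = ceiling_subset_size_bounds[OF assms(1) this, folded s_def]
  then have "s < d"
    by linarith
  have p: "real s = p * real d" "1 / (1 + exp eps) \<le> p" "p \<le> 1 / 2" "0 \<le> p" "p \<le> 1"
    using assms(1) s_bounds by (simp_all add: p_def field_simps)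
  note N = sample_size_bound[OF exp_ge_zero assms(3,5)]
  have "exp eps > 1"
    using \<open>exp eps \<ge> 2\<close> by linarith
  note comparison = debiased_risk_shortfall_le[OF assms(1) s_bounds(1) p(1) this p(2,3) assms(3)
      binomial_shortfall_bounds[OF N(2) p(4,5)] N(2,1),
      folded mmrc_G_eq_shortfall[OF N(2), where d = d and s = s and eps = eps, folded p_def]]
  have "mmrc_risk d s eps N j = debiased_risk d s (mmrc_G d s eps N)"
    using mmrc_risk_eq_debiased_risk[OF assms(4) s_bounds(1) \<open>s < d\<close> N(2)] comparison(1) by simp
  also have "\<dots> \<le> (1 + 4 * lam + 5 * lam\<^sup>2 + 2 * lam ^ 3) * debiased_risk d s (ss_cap_prob (exp eps) p)"
    by (rule comparison(2))
  also have "debiased_risk d s (ss_cap_prob (exp eps) p) = ss_risk d s eps j"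
    using ss_risk_eq_debiased_risk[OF assms(4) s_bounds(1) \<open>s < d\<close>] assms(2) by (simp add: p_def)
  finally show ?thesis
    by (simp add: s_def)
qed

end
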